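(* Let $n$ and $k$ be integers with $2 \le k < n$. Then the $(n,k)$ batch mix is stable, i.e., its state process $L(t)$ is positive recurrent (equivalently, it admits an invariant probability measure).
   Context: An $(n,k)$ batch mix (with integers $n \ge 2$, $2 \le k \le n$) is a system of $n$ first-in first-out queues with infinite buffers, where queue $i$ receives messages from its own sender according to a Poisson process of rate $\lambda>0$, the $n$ arrival processes being independent. Messages are held (blocked) as long as fewer than $k$ queues are non-empty; as soon as $k$ queues become non-empty (which happens at an arrival instant, the arriving message counting as present), one message is removed from the head of each of these $k$ non-empty queues and dispatched instantly. Hence at any time at most $k-1$ queues are non-empty. No transmission or reception delays are modeled. The state of the system is the continuous-time Markov process $L(t) = (l_1(t), \dots, l_{k-1}(t))$, where $l_i(t)$ is the length of the $i$-th longest queue at time $t$. Stability means existence of an invariant probability measure for $L(t)$. *)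

theory Defs
  imports "HOL-Analysis.Analysis"
begin

text \<open>States of the (n,k) batch mix: the vector (l_1,...,l_{k-1}) of the k-1 longest
  queue lengths, in non-increasing order (the remaining n-k+1 queues are empty).\<close>
definition batch_states :: "nat \<Rightarrow> nat list set" where
  "batch_states k = {xs. length xs = k - 1 \<and> sorted_wrt (\<ge>) xs}"

text \<open>Effect of an arrival to queue j (j < n) in state xs: queues 0..k-2 carry the lengths
  in xs, queues k-1..n-1 are empty.\<close>
definition batch_step :: "nat \<Rightarrow> nat \<Rightarrow> nat list \<Rightarrow> nat \<Rightarrow> nat list" where
  "batch_step n k xs j =
     (let ys = xs @ replicate (n - length xs) 0;
          ys' = ys[j := ys ! j + 1];
          ys'' = (if length (filter (\<lambda>x. x \<noteq> 0) ys') = k then map (\<lambda>x. x - 1) ys' else ys')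
      in take (k - 1) (rev (sort ys'')))"

text \<open>Generator (Q-matrix) of the continuous-time Markov chain L(t): every queue receives
  messages at rate lambda, so the rate from s to s' is lambda times the number of queues
  whose arrival leads from s to s'; the diagonal entry is minus the total rate n*lambda.\<close>
definition batch_generator :: "nat \<Rightarrow> nat \<Rightarrow> real \<Rightarrow> nat list \<Rightarrow> nat list \<Rightarrow> real" where
  "batch_generator n k lam s s' =
     lam * real (card {j. j < n \<and> batch_step n k s j = s'}) - (if s = s' then real n * lam else 0)"

definition ctmc_invariant_prob :: "'s set \<Rightarrow> ('s \<Rightarrow> 's \<Rightarrow> real) \<Rightarrow> ('s \<Rightarrow> real) \<Rightarrow> bool" where
  "ctmc_invariant_prob S Q p \<longleftrightarrow>
     (\<forall>s\<in>S. p s \<ge> 0) \<and> (p has_sum 1) S \<and>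
     (\<forall>s'\<in>S. ((\<lambda>s. p s * Q s s') has_sum 0) S)"

definition batch_mix_stable :: "nat \<Rightarrow> nat \<Rightarrow> real \<Rightarrow> bool" where
  "batch_mix_stable n k lam \<longleftrightarrow>
     (\<exists>p. ctmc_invariant_prob (batch_states k) (batch_generator n k lam) p)"

end

(*
  Uniformization: the state process jumps at total rate n * lam, each jump being an arrival at a
  uniformly chosen queue, so every invariant law of this jump chain is annihilated by the generator.

  For the jump chain, V = (n + k - 1) * sum l_i^2 - 2 * (sum l_i)^2 is a Foster-Lyapunov function:
  it is nonnegative by Cauchy-Schwarz, and its mean change in one step is at most C - 2 T / n, where
  T = sum l_i is the backlog. The mean change is computed exactly, separately for full states (k - 1
  nonempty queues), where an arrival at any of the n - k + 1 >= 2 empty queues completes a batch,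
  and for the other states, where no arrival completes a batch.

  Summing the drift along the chain started empty bounds the time-averaged mean backlog, so the
  Cesaro averages of the laws are tight. A pointwise limit along a subsequence (Tychonoff) keeps
  mass at least 1/2, is invariant because every state has finitely many predecessors, and
  normalizes to an invariant probability (Krylov-Bogolyubov).
*)
theory Submission
  imports Defs
begin

locale uniform_choice_chain =
  fixes S :: "'s::countable set" and n :: nat and move :: "'s \<Rightarrow> nat \<Rightarrow> 's" and start :: 's
  assumes n_pos: "0 < n"
    and move_closed: "s \<in> S \<Longrightarrow> j < n \<Longrightarrow> move s j \<in> S"
    and start_in_S: "start \<in> S"
    and finite_predecessors: "finite {s \<in> S. \<exists>j<n. move s j = s'}"
begin

definition predecessors :: "'s \<Rightarrow> 's set" where
  "predecessors s' = {s \<in> S. \<exists>j<n. move s j = s'}"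

lemma finite_predecessors_set: "finite (predecessors s')"
  using finite_predecessors by (simp add: predecessors_def)

definition move_count :: "'s \<Rightarrow> 's \<Rightarrow> nat" where
  "move_count s s' = card {j. j < n \<and> move s j = s'}"

definition step_mean :: "('s \<Rightarrow> real) \<Rightarrow> 's \<Rightarrow> real" where
  "step_mean g s = (\<Sum>j<n. g (move s j)) / real n"

primrec reach :: "nat \<Rightarrow> 's set" where
  "reach 0 = {start}"
| "reach (Suc t) = (\<lambda>(s, j). move s j) ` (reach t \<times> {..<n})"

primrec law :: "nat \<Rightarrow> 's \<Rightarrow> real" where
  "law 0 s = (if s = start then 1 else 0)"
| "law (Suc t) s' = (\<Sum>s\<in>reach t. law t s * real (move_count s s')) / real n"

definition expect :: "nat \<Rightarrow> ('s \<Rightarrow> real) \<Rightarrow> real" where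
  "expect t g = (\<Sum>s\<in>reach t. law t s * g s)"

lemma finite_reach: "finite (reach t)"
  by (induction t) auto

lemma move_in_reach: "s \<in> reach t \<Longrightarrow> j < n \<Longrightarrow> move s j \<in> reach (Suc t)"
  by force

lemma reach_subset: "reach t \<subseteq> S"
  by (induction t) (auto simp: start_in_S move_closed)

lemma move_count_eq_0_iff: "move_count s s' = 0 \<longleftrightarrow> (\<forall>j<n. move s j \<noteq> s')"
  by (auto simp: move_count_def card_eq_0_iff)

lemma law_nonneg: "0 \<le> law t s"
  by (induction t arbitrary: s) (auto intro!: sum_nonneg divide_nonneg_nonneg)

lemma law_eq_0: "s \<notin> reach t \<Longrightarrow> law t s = 0"
proof (induction t arbitrary: s)
  case (Suc t)
  then have "move_count s' s = 0" if "s' \<in> reach t" for s'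
    using that by (force simp: move_count_eq_0_iff)
  then show ?case by simp
qed simp

lemma sum_move_count:
  assumes "finite A" and "\<And>j. j < n \<Longrightarrow> move s j \<in> A"
  shows "(\<Sum>s'\<in>A. real (move_count s s') * g s') = (\<Sum>j<n. g (move s j))"
proof -
  have "(\<Sum>j<n. g (move s j)) = (\<Sum>s'\<in>A. \<Sum>j | j \<in> {..<n} \<and> move s j = s'. g (move s j))"
    by (rule sum.group[symmetric]) (use assms in auto)
  also have "\<dots> = (\<Sum>s'\<in>A. real (move_count s s') * g s')"
    by (rule sum.cong) (auto simp: move_count_def)
  finally show ?thesis ..
qed

lemma expect_Suc: "expect (Suc t) g = expect t (step_mean g)"
proof -
  have "expect (Suc t) g
      = (\<Sum>s'\<in>reach (Suc t). \<Sum>s\<in>reach t. law t s * (real (move_count s s') * g s')) / real n"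
    by (simp add: expect_def sum_divide_distrib sum_distrib_right mult.assoc)
  also have "\<dots>
      = (\<Sum>s\<in>reach t. law t s * (\<Sum>s'\<in>reach (Suc t). real (move_count s s') * g s')) / real n"
    by (subst sum.swap) (simp only: sum_distrib_left)
  also have "\<dots> = expect t (step_mean g)"
    unfolding expect_def step_mean_def sum_divide_distrib[symmetric] times_divide_eq_right
    by (intro arg_cong[where f = "\<lambda>x. x / real n"] sum.cong refl)
      (simp add: sum_move_count finite_reach move_in_reach del: reach.simps)
  finally show ?thesis .
qed

lemma expect_one: "expect t (\<lambda>_. 1) = 1"
proof (induction t)
  case (Suc t)
  have "step_mean (\<lambda>_. 1) = (\<lambda>_. 1)"
    using n_pos by (simp add: step_mean_def fun_eq_iff)
  with Suc show ?case by (simp add: expect_Suc)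
qed (simp add: expect_def)

lemma expect_mono: "(\<And>s. s \<in> S \<Longrightarrow> g s \<le> h s) \<Longrightarrow> expect t g \<le> expect t h"
  unfolding expect_def
  by (intro sum_mono mult_left_mono) (use reach_subset law_nonneg in auto)

lemma sum_law_le_1:
  assumes "finite A"
  shows "(\<Sum>s\<in>A. law t s) \<le> 1"
proof -
  have "(\<Sum>s\<in>A. law t s) = (\<Sum>s\<in>A \<inter> reach t. law t s)"
    by (rule sum.mono_neutral_right) (use assms law_eq_0 in auto)
  also have "\<dots> \<le> (\<Sum>s\<in>reach t. law t s)"
    by (rule sum_mono2) (use finite_reach law_nonneg in auto)
  also have "\<dots> = 1"
    using expect_one[of t] by (simp add: expect_def)
  finally show ?thesis .
qed

lemma law_Suc_predecessors:
  "law (Suc t) s' = (\<Sum>s\<in>predecessors s'. law t s * real (move_count s s')) / real n"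
proof -
  have "(\<Sum>s\<in>reach t. law t s * real (move_count s s'))
      = (\<Sum>s\<in>reach t \<inter> predecessors s'. law t s * real (move_count s s'))"
    using reach_subset
    by (intro sum.mono_neutral_right finite_reach) (auto simp: predecessors_def move_count_eq_0_iff)
  also have "\<dots> = (\<Sum>s\<in>predecessors s'. law t s * real (move_count s s'))"
    using finite_predecessors_set law_eq_0
    by (intro sum.mono_neutral_left) (auto simp: predecessors_def)
  finally show ?thesis by simp
qed

lemma expect_add: "expect t (\<lambda>s. g s + h s) = expect t g + expect t h"
  by (simp add: expect_def distrib_left sum.distrib)

lemma expect_diff: "expect t (\<lambda>s. g s - h s) = expect t g - expect t h"
  by (simp add: expect_def right_diff_distrib sum_subtractf)

lemma expect_const: "expect t (\<lambda>_. c) = c"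
  using expect_one[of t] by (simp add: expect_def sum_distrib_right[symmetric])

lemma expect_divide: "expect t (\<lambda>s. g s / c) = expect t g / c"
  by (simp add: expect_def sum_divide_distrib)

definition cesaro :: "nat \<Rightarrow> 's \<Rightarrow> real" where
  "cesaro N s = (\<Sum>t\<le>N. law t s) / real (Suc N)"

lemma cesaro_nonneg: "0 \<le> cesaro N s"
  unfolding cesaro_def by (intro divide_nonneg_nonneg sum_nonneg law_nonneg) auto

lemma sum_cesaro_eq: "(\<Sum>s\<in>A. cesaro N s) = (\<Sum>t\<le>N. \<Sum>s\<in>A. law t s) / real (Suc N)"
  unfolding cesaro_def by (simp add: sum_divide_distrib[symmetric] sum.swap[of _ A])

lemma sum_cesaro_le_1:
  assumes "finite A"
  shows "(\<Sum>s\<in>A. cesaro N s) \<le> 1"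
proof -
  have "(\<Sum>t\<le>N. \<Sum>s\<in>A. law t s) \<le> (\<Sum>t\<le>N. 1)"
    by (intro sum_mono sum_law_le_1 assms)
  then show ?thesis
    by (simp add: sum_cesaro_eq)
qed

lemma cesaro_almost_invariant:
  "(\<Sum>s\<in>predecessors s'. cesaro N s * real (move_count s s')) / real n
     = cesaro N s' + (law (Suc N) s' - law 0 s') / real (Suc N)"
proof -
  have "(\<Sum>s\<in>predecessors s'. cesaro N s * real (move_count s s'))
      = (\<Sum>t\<le>N. \<Sum>s\<in>predecessors s'. law t s * real (move_count s s')) / real (Suc N)"
    by (simp add: cesaro_def sum_divide_distrib[symmetric] sum_distrib_right sum.swap[of _ "predecessors s'"])
  then have "(\<Sum>s\<in>predecessors s'. cesaro N s * real (move_count s s')) / real n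
      = (\<Sum>t\<le>N. (\<Sum>s\<in>predecessors s'. law t s * real (move_count s s')) / real n) / real (Suc N)"
    by (simp add: sum_divide_distrib[symmetric])
  also have "\<dots> = (\<Sum>t\<le>N. law (Suc t) s') / real (Suc N)"
    by (simp only: law_Suc_predecessors)
  also have "(\<Sum>t\<le>N. law (Suc t) s') = (\<Sum>t\<le>N. law t s') + law (Suc N) s' - law 0 s'"
    using sum.atMost_Suc_shift[of "\<lambda>t. law t s'" N] by simp
  finally show ?thesis
    by (simp add: cesaro_def diff_divide_distrib add_divide_distrib)
qed

lemma cesaro_limit_invariant:
  assumes "strict_mono r" and lim: "\<And>s. (\<lambda>N. cesaro (r N) s) \<longlonglongrightarrow> l s"
  shows "(\<Sum>s\<in>predecessors s'. l s * real (move_count s s')) = real n * l s'"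
proof -
  define g where "g N = (\<Sum>s\<in>predecessors s'. cesaro (r N) s * real (move_count s s')) / real n
    - cesaro (r N) s'" for N
  have "g \<longlonglongrightarrow> (\<Sum>s\<in>predecessors s'. l s * real (move_count s s')) / real n - l s'"
    unfolding g_def by (intro tendsto_intros lim) (use n_pos in auto)
  moreover have "g \<longlonglongrightarrow> 0"
  proof (rule Lim_null_comparison)
    have "law t s' \<le> 1" for t
      using sum_law_le_1[of "{s'}" t] by simp
    then have "\<bar>law (Suc (r N)) s' - law 0 s'\<bar> \<le> 1" for N
      using law_nonneg by (simp only: abs_le_iff) (smt (verit))
    moreover have "g N = (law (Suc (r N)) s' - law 0 s') / real (Suc (r N))" for N
      unfolding g_def cesaro_almost_invariant by simp
    moreover have "\<bar>a / real (Suc m)\<bar> \<le> inverse (real (Suc m))" if "\<bar>a\<bar> \<le> 1" for a :: real and m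
      using divide_right_mono[OF that, of "real (Suc m)"] by (simp add: abs_divide inverse_eq_divide)
    ultimately show "\<forall>\<^sub>F N in sequentially. norm (g N) \<le> inverse (real (Suc (r N)))"
      by (simp del: law.simps of_nat_Suc)
    show "(\<lambda>N. inverse (real (Suc (r N)))) \<longlonglongrightarrow> 0"
      using LIMSEQ_subseq_LIMSEQ[OF LIMSEQ_inverse_real_of_nat \<open>strict_mono r\<close>]
      by (simp add: o_def)
  qed
  ultimately have "(\<Sum>s\<in>predecessors s'. l s * real (move_count s s')) / real n - l s' = 0"
    using LIMSEQ_unique by blast
  then show ?thesis
    using n_pos by (simp add: field_simps)
qed

definition stationary_distribution :: "('s \<Rightarrow> real) \<Rightarrow> bool" where
  "stationary_distribution p \<longleftrightarrow> (\<forall>s\<in>S. 0 \<le> p s) \<and> (p has_sum 1) S \<and>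
     (\<forall>s'\<in>S. ((\<lambda>s. p s * real (move_count s s')) has_sum real n * p s') S)"

lemma stationary_distribution_normalize:
  assumes nonneg: "\<And>s. s \<in> S \<Longrightarrow> 0 \<le> l s" and sum: "(l has_sum Z) S" and "0 < Z"
    and invariant:
      "\<And>s'. s' \<in> S \<Longrightarrow> (\<Sum>s\<in>predecessors s'. l s * real (move_count s s')) = real n * l s'"
  shows "stationary_distribution (\<lambda>s. l s / Z)"
  unfolding stationary_distribution_def
proof (intro conjI ballI)
  show "0 \<le> l s / Z" if "s \<in> S" for s
    using nonneg[OF that] \<open>0 < Z\<close> by simp
  show "((\<lambda>s. l s / Z) has_sum 1) S"
    using has_sum_cmult_right[OF sum, of "inverse Z"] \<open>0 < Z\<close> by (simp add: field_simps)
  show "((\<lambda>s. l s / Z * real (move_count s s')) has_sum real n * (l s' / Z)) S" if "s' \<in> S" for s'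
  proof (rule has_sum_finite_neutralI[OF finite_predecessors_set])
    show "real n * (l s' / Z) = (\<Sum>s\<in>predecessors s'. l s / Z * real (move_count s s'))"
      using invariant[OF that] by (simp add: sum_divide_distrib[symmetric])
  qed (auto simp: predecessors_def move_count_eq_0_iff)
qed

lemma stationary_distribution_generator:
  assumes "stationary_distribution p" and "s' \<in> S"
  shows "((\<lambda>s. p s * (lam * real (move_count s s') - (if s = s' then real n * lam else 0))) has_sum 0) S"
proof -
  have "((\<lambda>s. lam * (p s * real (move_count s s'))) has_sum lam * (real n * p s')) S"
    using assms by (intro has_sum_cmult_right) (simp add: stationary_distribution_def)
  moreover have "((\<lambda>s. - (if s = s' then p s' * real n * lam else 0)) has_sum - (p s' * real n * lam)) S"
    by (intro has_sum_uminus[THEN iffD2] has_sum_finite_neutralI[of "{s'}"]) (use assms(2) in auto)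
  ultimately have "((\<lambda>s. lam * (p s * real (move_count s s')) - (if s = s' then p s' * real n * lam else 0))
      has_sum 0) S"
    using has_sum_add by fastforce
  then show ?thesis
    by (rule has_sum_cong[THEN iffD1, rotated]) (simp add: algebra_simps)
qed

end

lemma pointwise_convergent_subseq:
  fixes F :: "nat \<Rightarrow> 'a::countable \<Rightarrow> 'b::metric_space"
  assumes "compact K" and "\<And>N x. F N x \<in> K"
  obtains l r where "strict_mono r" and "\<And>x. l x \<in> K" and "\<And>x. (\<lambda>N. F (r N) x) \<longlonglongrightarrow> l x"
proof -
  have "compactin (product_topology (\<lambda>_. euclidean) UNIV) (PiE UNIV (\<lambda>_::'a. K))"
    using assms(1) by (simp add: compactin_PiE)
  then have "seq_compact (PiE UNIV (\<lambda>_::'a. K))"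
    by (simp add: euclidean_product_topology compact_imp_seq_compact)
  moreover have "F N \<in> PiE UNIV (\<lambda>_. K)" for N
    using assms(2) by (simp add: PiE_iff)
  ultimately obtain l r where "l \<in> PiE UNIV (\<lambda>_. K)" "strict_mono r" "(F \<circ> r) \<longlonglongrightarrow> l"
    unfolding seq_compact_def by metis
  moreover have "(\<lambda>N. F (r N) x) \<longlonglongrightarrow> l x" for x
    using continuous_on_tendsto_compose[OF continuous_on_product_coordinates \<open>(F \<circ> r) \<longlonglongrightarrow> l\<close>]
    by (simp add: o_def)
  ultimately show thesis
    using that[of r l] by (simp add: PiE_iff)
qed

locale foster_lyapunov = uniform_choice_chain S n move start
  for S :: "'s::countable set" and n move start +
  fixes V f :: "'s \<Rightarrow> real" and C :: real
  assumes V_nonneg: "s \<in> S \<Longrightarrow> 0 \<le> V s"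
    and f_nonneg: "s \<in> S \<Longrightarrow> 0 \<le> f s"
    and finite_sublevel: "finite {s \<in> S. f s \<le> m}"
    and drift: "s \<in> S \<Longrightarrow> (\<Sum>j<n. V (move s j)) / real n \<le> V s - f s + C"
begin

lemma expect_telescope: "expect N V + (\<Sum>t<N. expect t f) \<le> V start + real N * C"
proof (induction N)
  case 0
  then show ?case by (simp add: expect_def)
next
  case (Suc N)
  have "expect (Suc N) V \<le> expect N (\<lambda>s. V s - f s + C)"
    unfolding expect_Suc step_mean_def by (rule expect_mono) (rule drift)
  also have "\<dots> = expect N V - expect N f + C"
    by (simp add: expect_add expect_diff expect_const)
  finally show ?case
    using Suc by (simp add: algebra_simps)
qed

lemma sum_expect_le: "(\<Sum>t<N. expect t f) \<le> V start + real N * C"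
proof -
  have "0 \<le> expect N V"
    using expect_mono[of "\<lambda>_. 0" V N] V_nonneg by (simp add: expect_const)
  then show ?thesis
    using expect_telescope[of N] by linarith
qed

lemma law_sublevel_ge:
  assumes "0 < m"
  shows "1 - expect t f / m \<le> (\<Sum>s\<in>{s \<in> S. f s \<le> m}. law t s)"
proof -
  have "1 - expect t f / m = expect t (\<lambda>s. 1 - f s / m)"
    by (simp add: expect_diff expect_const expect_divide)
  also have "\<dots> \<le> expect t (\<lambda>s. if f s \<le> m then 1 else 0)"
    using assms f_nonneg by (intro expect_mono) auto
  also have "\<dots> = (\<Sum>s\<in>{s \<in> reach t. f s \<le> m}. law t s)"
    by (auto simp: expect_def sum.inter_filter finite_reach intro!: sum.cong)
  also have "\<dots> \<le> (\<Sum>s\<in>{s \<in> S. f s \<le> m}. law t s)"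
    using reach_subset by (intro sum_mono2 finite_sublevel law_nonneg) auto
  finally show ?thesis .
qed

lemma cesaro_tight: "\<exists>K. finite K \<and> K \<subseteq> S \<and> (\<forall>N. 1 / 2 \<le> (\<Sum>s\<in>K. cesaro N s))"
proof (intro exI conjI allI)
  define m where "m = 2 * max 1 (V start + C)"
  have "0 < m" by (simp add: m_def)
  fix N
  have "real (Suc N) - (\<Sum>t\<le>N. expect t f) / m \<le> (\<Sum>t\<le>N. \<Sum>s\<in>{s \<in> S. f s \<le> m}. law t s)"
  proof -
    have "(\<Sum>t\<le>N. 1 - expect t f / m) \<le> (\<Sum>t\<le>N. \<Sum>s\<in>{s \<in> S. f s \<le> m}. law t s)"
      by (intro sum_mono law_sublevel_ge \<open>0 < m\<close>)
    then show ?thesis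
      by (simp add: sum_subtractf sum_divide_distrib[symmetric])
  qed
  moreover have "(\<Sum>t\<le>N. expect t f) / m \<le> real (Suc N) / 2"
  proof -
    have "V start \<le> real (Suc N) * V start"
      using V_nonneg[OF start_in_S] by (simp add: mult_le_cancel_right1)
    then have "(\<Sum>t\<le>N. expect t f) \<le> real (Suc N) * (V start + C)"
      using sum_expect_le[of "Suc N"] by (simp add: lessThan_Suc_atMost distrib_left)
    also have "\<dots> \<le> real (Suc N) * (m / 2)"
      by (intro mult_left_mono) (auto simp: m_def)
    finally show ?thesis
      using \<open>0 < m\<close> by (simp add: field_simps)
  qed
  ultimately have "real (Suc N) / 2 \<le> (\<Sum>t\<le>N. \<Sum>s\<in>{s \<in> S. f s \<le> m}. law t s)"
    by (smt (verit) field_sum_of_halves)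
  then show "1 / 2 \<le> (\<Sum>s\<in>{s \<in> S. f s \<le> m}. cesaro N s)"
    by (simp add: sum_cesaro_eq field_simps)
qed (use finite_sublevel in auto)

theorem stationary_distribution_exists: "\<exists>p. stationary_distribution p"
proof -
  obtain K where "finite K" "K \<subseteq> S" and K_mass: "\<And>N. 1 / 2 \<le> (\<Sum>s\<in>K. cesaro N s)"
    using cesaro_tight by blast
  have "cesaro N s \<in> {0..1}" for N s
    using cesaro_nonneg sum_cesaro_le_1[of "{s}" N] by simp
  then obtain l r where "strict_mono r" and l01: "\<And>s. l s \<in> {0..1}"
    and lim: "\<And>s. (\<lambda>N. cesaro (r N) s) \<longlonglongrightarrow> l s"
    using pointwise_convergent_subseq[of "{0..1::real}" cesaro] by blast
  have lim_sum: "(\<lambda>N. \<Sum>s\<in>A. cesaro (r N) s) \<longlonglongrightarrow> (\<Sum>s\<in>A. l s)" for A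
    by (intro tendsto_sum lim)
  have "l summable_on S"
  proof (rule nonneg_bdd_above_summable_on)
    show "bdd_above (sum l ` {A. A \<subseteq> S \<and> finite A})"
    proof (rule bdd_aboveI2)
      show "sum l A \<le> 1" if "A \<in> {A. A \<subseteq> S \<and> finite A}" for A
        using that sum_cesaro_le_1 by (intro LIMSEQ_le_const2[OF lim_sum]) auto
    qed
  qed (use l01 in auto)
  moreover have "1 / 2 \<le> (\<Sum>s\<in>K. l s)"
    using K_mass by (intro LIMSEQ_le_const[OF lim_sum]) auto
  ultimately have "0 < infsum l S"
    using finite_sum_le_infsum[of l S K] \<open>finite K\<close> \<open>K \<subseteq> S\<close> l01 by fastforce
  moreover have "(\<Sum>s\<in>predecessors s'. l s * real (move_count s s')) = real n * l s'" for s'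
    by (rule cesaro_limit_invariant[OF \<open>strict_mono r\<close> lim])
  ultimately have "stationary_distribution (\<lambda>s. l s / infsum l S)"
    using l01 \<open>l summable_on S\<close> by (intro stationary_distribution_normalize) auto
  then show ?thesis by blast
qed

end

lemma sum_list_replicate_0 [simp]: "sum_list (replicate m (0::'a::monoid_add)) = 0"
  by (induction m) auto

definition nonzeros :: "nat list \<Rightarrow> nat" where
  "nonzeros xs = length (filter (\<lambda>x. x \<noteq> 0) xs)"

lemma nonzeros_le_length: "nonzeros xs \<le> length xs"
  by (simp add: nonzeros_def)

lemma nonzeros_eq_length_iff: "nonzeros xs = length xs \<longleftrightarrow> 0 \<notin> set xs"
proof
  show "0 \<notin> set xs" if "nonzeros xs = length xs"
    using that length_filter_less[of 0 xs "\<lambda>x. x \<noteq> 0"] by (auto simp: nonzeros_def)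
  show "nonzeros xs = length xs" if "0 \<notin> set xs"
  proof -
    have "filter (\<lambda>x. x \<noteq> 0) xs = xs"
      using that by (intro filter_True) (auto intro!: gr0I)
    then show ?thesis
      by (simp add: nonzeros_def)
  qed
qed

lemma nonzeros_eq_sum_list: "real (nonzeros xs) = (\<Sum>x\<leftarrow>xs. if x = 0 then 0 else 1)"
  by (induction xs) (auto simp: nonzeros_def)

lemma sum_list_take_rev_sort:
  fixes g :: "nat \<Rightarrow> 'a::comm_monoid_add"
  assumes "g 0 = 0" and "nonzeros zs \<le> r"
  shows "(\<Sum>x\<leftarrow>take r (rev (sort zs)). g x) = (\<Sum>x\<leftarrow>zs. g x)"
proof -
  define Z where "Z = filter (\<lambda>x. 0 = x) zs"
  define F where "F = filter (\<lambda>x. x \<noteq> 0) zs"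
  have Z: "Z = replicate (length Z) 0"
    unfolding Z_def by (rule replicate_length_filter[symmetric])
  have "sort zs = Z @ sort F"
  proof (rule properties_for_sort)
    have "mset zs = mset Z + mset F"
      unfolding Z_def F_def by (induction zs) auto
    then show "mset (Z @ sort F) = mset zs"
      by simp
    show "sorted (Z @ sort F)"
      by (subst Z) (simp add: sorted_append)
  qed
  then have "rev (sort zs) = rev (sort F) @ replicate (length Z) 0"
    by (subst (asm) Z) simp
  moreover have "length F \<le> r"
    using assms(2) by (simp add: F_def nonzeros_def)
  ultimately have "take r (rev (sort zs)) = rev (sort F) @ replicate (min (r - length F) (length Z)) 0"
    by (simp add: take_append)
  then have "(\<Sum>x\<leftarrow>take r (rev (sort zs)). g x) = (\<Sum>x\<leftarrow>sort F. g x)"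
    using assms(1) by (simp flip: rev_map)
  also have "\<dots> = (\<Sum>x\<leftarrow>F. g x)"
    by (simp only: mset_map mset_sort flip: sum_mset_sum_list)
  also have "\<dots> = (\<Sum>x\<leftarrow>zs. g x)"
    unfolding F_def using assms(1) by (induction zs) auto
  finally show ?thesis .
qed

lemma sum_list_map_update:
  fixes g :: "'a \<Rightarrow> 'b::ab_group_add"
  assumes "j < length xs"
  shows "(\<Sum>x\<leftarrow>xs[j := v]. g x) = (\<Sum>x\<leftarrow>xs. g x) - g (xs ! j) + g v"
  using assms
proof (induction xs arbitrary: j)
  case (Cons a xs)
  then show ?case by (cases j) auto
qed simp

definition padded :: "nat \<Rightarrow> nat list \<Rightarrow> nat list" where
  "padded n xs = xs @ replicate (n - length xs) 0"

definition arrival :: "nat \<Rightarrow> nat list \<Rightarrow> nat \<Rightarrow> nat list" where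
  "arrival n xs j = (padded n xs)[j := padded n xs ! j + 1]"

definition dispatch :: "nat \<Rightarrow> nat list \<Rightarrow> nat list" where
  "dispatch k ys = (if nonzeros ys = k then map (\<lambda>x. x - 1) ys else ys)"

lemma batch_step_eq: "batch_step n k xs j = take (k - 1) (rev (sort (dispatch k (arrival n xs j))))"
  by (simp add: batch_step_def arrival_def dispatch_def nonzeros_def padded_def Let_def)

lemma length_padded: "length xs \<le> n \<Longrightarrow> length (padded n xs) = n"
  by (simp add: padded_def)

lemma sum_list_padded:
  fixes g :: "nat \<Rightarrow> 'a::comm_monoid_add"
  shows "g 0 = 0 \<Longrightarrow> (\<Sum>x\<leftarrow>padded n xs. g x) = (\<Sum>x\<leftarrow>xs. g x)"
  by (simp add: padded_def)

lemma sum_padded_nth: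
  fixes g :: "nat \<Rightarrow> 'a::comm_monoid_add"
  assumes "g 0 = 0" and "length xs \<le> n"
  shows "(\<Sum>j<n. g (padded n xs ! j)) = (\<Sum>x\<leftarrow>xs. g x)"
  using sum_list_sum_nth[of "map g (padded n xs)"] assms
  by (simp add: length_padded sum_list_padded atLeast0LessThan)

lemma sum_list_arrival:
  fixes g :: "nat \<Rightarrow> 'a::ab_group_add"
  assumes "g 0 = 0" and "length xs \<le> n" and "j < n"
  shows "(\<Sum>x\<leftarrow>arrival n xs j. g x)
    = (\<Sum>x\<leftarrow>xs. g x) - g (padded n xs ! j) + g (padded n xs ! j + 1)"
  using assms by (simp add: arrival_def sum_list_map_update length_padded sum_list_padded)

definition completes_batch :: "nat \<Rightarrow> nat list \<Rightarrow> nat \<Rightarrow> bool" where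
  "completes_batch n xs j \<longleftrightarrow> 0 \<notin> set xs \<and> padded n xs ! j = 0"

definition backlog :: "nat list \<Rightarrow> real" where
  "backlog xs = (\<Sum>x\<leftarrow>xs. real x)"

definition sum_sq :: "nat list \<Rightarrow> real" where
  "sum_sq xs = (\<Sum>x\<leftarrow>xs. real x ^ 2)"

lemma backlog_eq_sum_list: "backlog xs = real (sum_list xs)"
  by (induction xs) (auto simp: backlog_def)

lemma backlog_nonneg: "0 \<le> backlog xs"
  by (simp add: backlog_eq_sum_list)

lemma sum_sq_nonneg: "0 \<le> sum_sq xs"
  by (induction xs) (auto simp: sum_sq_def)

lemma backlog_squared_le: "backlog xs ^ 2 \<le> real (length xs) * sum_sq xs"
  using Cauchy_Schwarz_ineq_sum[of "\<lambda>i. real (xs ! i)" "\<lambda>_. 1" "{..<length xs}"]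
  by (simp add: backlog_def sum_sq_def sum_list_sum_nth atLeast0LessThan mult.commute)

locale batch_mix =
  fixes n k :: nat
  assumes k_pos: "1 \<le> k" and k_le_n: "k \<le> n"
begin

lemma length_state: "s \<in> batch_states k \<Longrightarrow> length s = k - 1"
  by (simp add: batch_states_def)

lemma length_state_le: "s \<in> batch_states k \<Longrightarrow> length s \<le> n"
  using k_le_n by (simp add: batch_states_def)

lemma nonzeros_arrival:
  assumes "s \<in> batch_states k" and "j < n"
  shows "nonzeros (arrival n s j) = nonzeros s + (if padded n s ! j = 0 then 1 else 0)"
proof -
  have "real (nonzeros (arrival n s j)) = real (nonzeros s) + real (if padded n s ! j = 0 then 1 else 0)"
    unfolding nonzeros_eq_sum_list
    by (subst sum_list_arrival[OF _ length_state_le[OF assms(1)] assms(2)]) auto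
  then show ?thesis
    by (simp only: of_nat_add[symmetric] of_nat_eq_iff)
qed

lemma nonzeros_arrival_eq_k_iff:
  assumes "s \<in> batch_states k" and "j < n"
  shows "nonzeros (arrival n s j) = k \<longleftrightarrow> completes_batch n s j"
  using nonzeros_arrival[OF assms] nonzeros_le_length[of s] nonzeros_eq_length_iff[of s]
    length_state[OF assms(1)] k_pos
  by (auto simp: completes_batch_def)

lemma sum_list_dispatch_arrival:
  fixes g :: "nat \<Rightarrow> 'a::ab_group_add"
  assumes "g 0 = 0" and "s \<in> batch_states k" and "j < n"
  shows "(\<Sum>x\<leftarrow>dispatch k (arrival n s j). g x)
    = (if completes_batch n s j then (\<Sum>x\<leftarrow>s. g (x - 1))
     else (\<Sum>x\<leftarrow>s. g x) - g (padded n s ! j) + g (padded n s ! j + 1))"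
proof (cases "completes_batch n s j")
  case True
  then have "dispatch k (arrival n s j) = map (\<lambda>x. x - 1) (arrival n s j)"
    by (simp only: dispatch_def nonzeros_arrival_eq_k_iff[OF assms(2,3)] if_True)
  then show ?thesis
    using sum_list_arrival[of "\<lambda>x. g (x - 1)", OF _ length_state_le[OF assms(2)] assms(3)] assms(1) True
    by (simp add: completes_batch_def o_def)
next
  case False
  then have "dispatch k (arrival n s j) = arrival n s j"
    by (simp only: dispatch_def nonzeros_arrival_eq_k_iff[OF assms(2,3)] if_False)
  then show ?thesis
    using sum_list_arrival[of g, OF assms(1) length_state_le[OF assms(2)] assms(3)] False by simp
qed

lemma nonzeros_dispatch_arrival:
  assumes "s \<in> batch_states k" and "j < n"
  shows "nonzeros (dispatch k (arrival n s j)) \<le> k - 1"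
proof -
  define y where "y = padded n s ! j"
  have "real (nonzeros (dispatch k (arrival n s j)))
      = (if completes_batch n s j then (\<Sum>x\<leftarrow>s. if x - 1 = 0 then 0 else 1)
         else real (nonzeros s) + (if y = 0 then 1 else 0))"
    unfolding nonzeros_eq_sum_list
    by (subst sum_list_dispatch_arrival[OF _ assms]) (auto simp: y_def)
  also have "\<dots> \<le> real (k - 1)"
  proof (cases "completes_batch n s j")
    case True
    have "(\<Sum>x\<leftarrow>s. if x - 1 = 0 then 0 else 1) \<le> (\<Sum>x\<leftarrow>s. 1::real)"
      by (intro sum_list_mono) auto
    with True show ?thesis
      using length_state[OF assms(1)] by (simp add: sum_list_triv)
  next
    case False
    then have "y = 0 \<Longrightarrow> nonzeros s < length s"
      using nonzeros_le_length[of s] nonzeros_eq_length_iff[of s]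
      by (simp add: completes_batch_def y_def)
    with False show ?thesis
      using length_state[OF assms(1)] nonzeros_le_length[of s] by auto
  qed
  finally show ?thesis
    by simp
qed

lemma batch_step_in_states: "s \<in> batch_states k \<Longrightarrow> batch_step n k s j \<in> batch_states k"
  using length_state_le[of s]
  by (auto simp: batch_states_def batch_step_eq arrival_def dispatch_def length_padded sorted_wrt_rev
      intro: sorted_wrt_take)

lemma sum_list_batch_step:
  fixes g :: "nat \<Rightarrow> 'a::ab_group_add"
  assumes "g 0 = 0" and "s \<in> batch_states k" and "j < n"
  shows "(\<Sum>x\<leftarrow>batch_step n k s j. g x)
    = (if completes_batch n s j then (\<Sum>x\<leftarrow>s. g (x - 1))
     else (\<Sum>x\<leftarrow>s. g x) - g (padded n s ! j) + g (padded n s ! j + 1))"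
  unfolding batch_step_eq
  by (simp only: sum_list_take_rev_sort[of g, OF assms(1) nonzeros_dispatch_arrival[OF assms(2,3)]]
      sum_list_dispatch_arrival[of g, OF assms])

lemma backlog_batch_step:
  assumes "s \<in> batch_states k" and "j < n"
  shows "backlog (batch_step n k s j)
    = (if completes_batch n s j then backlog s - (real k - 1) else backlog s + 1)"
proof -
  have "(\<Sum>x\<leftarrow>s. real (x - 1)) = backlog s - real (length s)" if "0 \<notin> set s"
    using that by (induction s) (auto simp: backlog_def of_nat_diff)
  then show ?thesis
    using sum_list_batch_step[of real, OF _ assms] length_state[OF assms(1)] k_pos
    by (simp add: backlog_def completes_batch_def of_nat_diff)
qed

lemma sum_sq_batch_step:
  assumes "s \<in> batch_states k" and "j < n"
  shows "sum_sq (batch_step n k s j) = (if completes_batch n s j then sum_sq s - 2 * backlog s + (real k - 1)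
    else sum_sq s + 2 * real (padded n s ! j) + 1)"
proof -
  have "(\<Sum>x\<leftarrow>s. real (x - 1) ^ 2) = sum_sq s - 2 * backlog s + real (length s)" if "0 \<notin> set s"
    using that by (induction s) (auto simp: backlog_def sum_sq_def of_nat_diff power2_eq_square algebra_simps)
  then show ?thesis
    using sum_list_batch_step[of "\<lambda>x. real x ^ 2", OF _ assms] length_state[OF assms(1)] k_pos
    by (simp add: sum_sq_def completes_batch_def of_nat_diff power2_eq_square algebra_simps)
qed

text \<open>The weight \<open>n + k - 1\<close> lies strictly between \<open>2 * (k - 1)\<close> and \<open>2 * n\<close>. The lower bound
  makes the function nonnegative and gives full states the backlog drift \<open>-2 * (n - k) * (n - k + 1)\<close>;
  the upper bound gives all other states the backlog drift \<open>-2 * (n - k + 1)\<close>.\<close>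

definition lyapunov :: "nat list \<Rightarrow> real" where
  "lyapunov s = (real n + real k - 1) * sum_sq s - 2 * backlog s ^ 2"

lemma lyapunov_batch_step:
  assumes "s \<in> batch_states k" and "j < n"
  shows "lyapunov (batch_step n k s j) = (if completes_batch n s j
    then (real n + real k - 1) * (sum_sq s - 2 * backlog s + (real k - 1)) - 2 * (backlog s - (real k - 1)) ^ 2
    else (real n + real k - 1) * (sum_sq s + 2 * real (padded n s ! j) + 1) - 2 * (backlog s + 1) ^ 2)"
  using assms by (simp add: lyapunov_def backlog_batch_step sum_sq_batch_step)

lemma sum_lyapunov_batch_step_nonfull:
  assumes "s \<in> batch_states k" and "0 \<in> set s"
  shows "(\<Sum>j<n. lyapunov (batch_step n k s j))
    = real n * lyapunov s - 2 * (real n - real k + 1) * backlog s + real n * (real n + real k - 3)"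
proof -
  have "(\<Sum>j<n. lyapunov (batch_step n k s j))
      = (\<Sum>j<n. (real n + real k - 1) * (sum_sq s + 1) - 2 * (backlog s + 1) ^ 2
          + 2 * (real n + real k - 1) * real (padded n s ! j))"
    using assms by (intro sum.cong) (auto simp: lyapunov_batch_step completes_batch_def algebra_simps)
  also have "\<dots> = real n * ((real n + real k - 1) * (sum_sq s + 1) - 2 * (backlog s + 1) ^ 2)
      + 2 * (real n + real k - 1) * backlog s"
    using sum_padded_nth[of real, OF _ length_state_le[OF assms(1)]]
    by (simp add: sum.distrib sum_distrib_left[symmetric] backlog_def)
  finally show ?thesis
    by (simp add: lyapunov_def power2_eq_square algebra_simps)
qed

lemma sum_lyapunov_batch_step_full:
  assumes "s \<in> batch_states k" and "0 \<notin> set s"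
  shows "(\<Sum>j<n. lyapunov (batch_step n k s j))
    = real n * lyapunov s - 2 * (real n - real k) * (real n - real k + 1) * backlog s
      + (real k - 1) * (real n + real k - 3) + (real n - real k + 1) * (real k - 1) * (real n - real k + 1)"
proof -
  define a where "a = real n + real k - 1"
  define A where "A = a * (sum_sq s - 2 * backlog s + (real k - 1)) - 2 * (backlog s - (real k - 1)) ^ 2"
  define B where "B = a * (sum_sq s + 1) - 2 * (backlog s + 1) ^ 2"
  have len: "length s = k - 1"
    using length_state[OF assms(1)] .
  have "s ! j \<noteq> 0" if "j < k - 1" for j
  proof
    assume "s ! j = 0"
    moreover have "s ! j \<in> set s"
      using len that by simp
    ultimately show False
      using assms(2) by simp
  qed
  then have "completes_batch n s j \<longleftrightarrow> k - 1 \<le> j" if "j < n" for j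
    using assms(2) len that by (auto simp: completes_batch_def padded_def nth_append)
  then have step: "lyapunov (batch_step n k s j) = (if j < k - 1 then B + 2 * a * real (s ! j) else A)"
    if "j < n" for j
    using assms(1) that len
    by (simp add: lyapunov_batch_step padded_def nth_append A_def B_def a_def algebra_simps)
  have "(\<Sum>j<n. lyapunov (batch_step n k s j))
      = (\<Sum>j<k - 1. lyapunov (batch_step n k s j)) + (\<Sum>j=k - 1..<n. lyapunov (batch_step n k s j))"
    using k_le_n by (simp add: lessThan_atLeast0 sum.atLeastLessThan_concat)
  also have "\<dots> = (\<Sum>j<k - 1. B + 2 * a * real (s ! j)) + (\<Sum>j=k - 1..<n. A)"
    using k_le_n by (intro arg_cong2[where f = "(+)"] sum.cong) (auto simp: step)
  also have "\<dots> = (real k - 1) * B + 2 * a * backlog s + (real n - real k + 1) * A"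
    using len k_pos k_le_n
    by (simp add: sum.distrib sum_distrib_left[symmetric] backlog_def sum_list_sum_nth atLeast0LessThan
        of_nat_diff)
  finally show ?thesis
    using k_pos k_le_n by (simp add: lyapunov_def A_def B_def a_def power2_eq_square algebra_simps)
qed

definition drift_bound :: real where
  "drift_bound = (real n + real k - 1) * ((real k - 1) * (real n - real k + 2) + real n)"

lemma sum_lyapunov_batch_step_le:
  assumes "k < n" and "s \<in> batch_states k"
  shows "(\<Sum>j<n. lyapunov (batch_step n k s j)) \<le> real n * lyapunov s - 2 * backlog s + drift_bound"
proof -
  define a where "a = real n + real k - 1"
  have T: "0 \<le> backlog s"
    by (rule backlog_nonneg)
  have K: "0 \<le> real k - 1" and d: "1 \<le> real n - real k" and "real n - real k + 1 \<le> a"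
    using k_pos assms(1) by (auto simp: a_def)
  have "0 \<le> a * real n"
    using k_pos by (simp add: a_def)
  then have bound: "a * ((real k - 1) * (real n - real k + 2)) \<le> drift_bound"
    by (simp add: drift_bound_def a_def distrib_left)
  show ?thesis
  proof (cases "0 \<in> set s")
    case True
    have "2 * backlog s \<le> 2 * (real n - real k + 1) * backlog s"
      using T d by (intro mult_right_mono) auto
    moreover have "real n * (real n + real k - 3) \<le> drift_bound"
    proof -
      have "real n * (real n + real k - 3) \<le> a * real n"
        by (simp add: a_def mult.commute mult_left_mono)
      moreover have "0 \<le> a * ((real k - 1) * (real n - real k + 2))"
        using K d by (simp add: a_def)
      ultimately show ?thesis
        by (simp add: drift_bound_def a_def distrib_left)
    qed
    ultimately show ?thesis
      using sum_lyapunov_batch_step_nonfull[OF assms(2) True] by linarith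
  next
    case False
    have "1 \<le> (real n - real k) * (real n - real k + 1)"
      using d mult_mono[OF d, of 1 "real n - real k + 1"] by simp
    then have "2 \<le> 2 * (real n - real k) * (real n - real k + 1)"
      by (simp only: mult.assoc)
    then have "2 * backlog s \<le> 2 * (real n - real k) * (real n - real k + 1) * backlog s"
      using T by (intro mult_right_mono)
    moreover have "(real k - 1) * (real n + real k - 3)
        + (real n - real k + 1) * (real k - 1) * (real n - real k + 1) \<le> drift_bound"
    proof -
      have "(real k - 1) * (real n + real k - 3) \<le> (real k - 1) * a"
        using K by (intro mult_left_mono) (auto simp: a_def)
      moreover have "(real n - real k + 1) * (real k - 1) * (real n - real k + 1)
          \<le> (real n - real k + 1) * (real k - 1) * a"
        using K d \<open>real n - real k + 1 \<le> a\<close> by (intro mult_left_mono) auto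
      moreover have "(real k - 1) * a + (real n - real k + 1) * (real k - 1) * a
          = a * ((real k - 1) * (real n - real k + 2))"
        by (simp add: algebra_simps)
      ultimately show ?thesis
        using bound by linarith
    qed
    ultimately show ?thesis
      using sum_lyapunov_batch_step_full[OF assms(2) False] by linarith
  qed
qed

lemma lyapunov_nonneg:
  assumes "s \<in> batch_states k"
  shows "0 \<le> lyapunov s"
proof -
  have "backlog s ^ 2 \<le> (real k - 1) * sum_sq s"
    using backlog_squared_le[of s] length_state[OF assms] k_pos by (simp add: of_nat_diff)
  moreover have "2 * (real k - 1) * sum_sq s \<le> (real n + real k - 1) * sum_sq s"
    using k_le_n sum_sq_nonneg[of s] by (intro mult_right_mono) auto
  ultimately show ?thesis
    by (simp only: lyapunov_def mult.assoc)
qed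

lemma finite_backlog_sublevel: "finite {s \<in> batch_states k. backlog s \<le> m}"
proof (rule finite_subset)
  show "{s \<in> batch_states k. backlog s \<le> m}
      \<subseteq> {xs. set xs \<subseteq> {..nat \<lfloor>m\<rfloor>} \<and> length xs = k - 1}"
    using member_le_sum_list
    by (fastforce simp: batch_states_def backlog_eq_sum_list le_nat_floor)
qed (simp add: finite_lists_length_eq)

lemma backlog_le_batch_step:
  "s \<in> batch_states k \<Longrightarrow> j < n \<Longrightarrow> backlog s \<le> backlog (batch_step n k s j) + real k"
  by (simp add: backlog_batch_step)

end

locale stable_batch_mix = batch_mix +
  assumes k_less_n: "k < n"
begin

sublocale foster_lyapunov "batch_states k" n "batch_step n k" "replicate (k - 1) 0" lyapunov
  "\<lambda>s. 2 * backlog s / real n" "drift_bound / real n"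
proof unfold_locales
  show "0 < n"
    using k_less_n by simp
  show "replicate (k - 1) 0 \<in> batch_states k"
    by (simp add: batch_states_def sorted_wrt_iff_nth_less)
  show "finite {s \<in> batch_states k. \<exists>j<n. batch_step n k s j = s'}" for s'
    by (rule finite_subset[OF _ finite_backlog_sublevel[of "backlog s' + real k"]])
      (auto dest: backlog_le_batch_step)
  show "finite {s \<in> batch_states k. 2 * backlog s / real n \<le> m}" for m
    using finite_backlog_sublevel[of "m * real n / 2"] k_less_n
    by (simp add: divide_le_eq mult.commute)
  show "(\<Sum>j<n. lyapunov (batch_step n k s j)) / real n
      \<le> lyapunov s - 2 * backlog s / real n + drift_bound / real n"
    if "s \<in> batch_states k" for s
    using sum_lyapunov_batch_step_le[OF k_less_n that] k_less_n
    by (simp add: field_simps)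
qed (auto simp: batch_step_in_states lyapunov_nonneg backlog_nonneg)

end

theorem theorem2:
  fixes n k :: nat and lam :: real
  assumes "2 \<le> k" and "k < n" and "lam > 0"
  shows "batch_mix_stable n k lam"
proof -
  interpret stable_batch_mix n k
    using assms by unfold_locales auto
  \<comment> \<open>The jump chain does not depend on the rate.\<close>
  obtain p where "stationary_distribution p"
    using stationary_distribution_exists by blast
  then have "ctmc_invariant_prob (batch_states k) (batch_generator n k lam) p"
    using stationary_distribution_generator[of p]
    by (simp add: ctmc_invariant_prob_def stationary_distribution_def batch_generator_def move_count_def)
  then show ?thesis
    unfolding batch_mix_stable_def by blast
qed

end
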